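(* Let $N\ge1$, $K>0$, $r_i>0$, let $(\mu_{ij})$ be a nonnegative, symmetric, irreducible $N\times N$ matrix, and let $\alpha:\mathbb{R}^N\to\mathbb{R}$ be locally Lipschitz with $\alpha(0)=0$, monotone increasing for the componentwise order, and such that there exist positive $R,k,c$ with $c(\sum_jv_j)^k\le\alpha(v)$ for all $v\in[0,\infty)^N$ with $\sum_j|v_j|\ge R$. If $v\in[0,\infty)^N$ is a nonnegative stationary solution of $$\frac{dv_i}{dt}=v_i\left[r_i-\frac{1}{K}\alpha(v)\right]+\sum_{j=1}^N\mu_{ij}(v_j-v_i),\qquad i=1,\dots,N,$$ then either $v\equiv0$ or $v_i>0$ for all $i$.
   Context: A stationary solution is a vector at which the right-hand side vanishes for every $i$. *)

theory Defs
  imports "HOL-Analysis.Analysis"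
begin

definition irreducible_mat :: "real^'n^'n \<Rightarrow> bool" where
  "irreducible_mat M \<longleftrightarrow>
     (\<forall>i j. i \<noteq> j \<longrightarrow> (i, j) \<in> {(a, b). a \<noteq> b \<and> M $ a $ b > 0}\<^sup>+)"

definition locally_lipschitz :: "(real^'n \<Rightarrow> real) \<Rightarrow> bool" where
  "locally_lipschitz f \<longleftrightarrow>
     (\<forall>x. \<exists>e>0. \<exists>L. \<forall>y\<in>ball x e. \<forall>z\<in>ball x e. \<bar>f y - f z\<bar> \<le> L * dist y z)"

definition rhs :: "real^'n \<Rightarrow> real \<Rightarrow> real^'n^'n \<Rightarrow> (real^'n \<Rightarrow> real) \<Rightarrow> real^'n \<Rightarrow> 'n \<Rightarrow> real" where
  "rhs r K \<mu> \<alpha> v i = v $ i * (r $ i - \<alpha> v / K) + (\<Sum>j\<in>UNIV. \<mu> $ i $ j * (v $ j - v $ i))"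

definition stationary :: "real^'n \<Rightarrow> real \<Rightarrow> real^'n^'n \<Rightarrow> (real^'n \<Rightarrow> real) \<Rightarrow> real^'n \<Rightarrow> bool" where
  "stationary r K \<mu> \<alpha> v \<longleftrightarrow> (\<forall>i. rhs r K \<mu> \<alpha> v i = 0)"

end

theory Submission
  imports Defs
begin

text \<open>If \<open>v\<close> is nonnegative and stationary and \<open>v\<^sub>a = 0\<close>, the reaction term at \<open>a\<close>
  vanishes and the \<open>a\<close>-th equation reduces to \<open>\<Sum>\<^sub>j \<mu>\<^sub>a\<^sub>j v\<^sub>j = 0\<close>, a sum of nonnegative
  terms; so \<open>v\<^sub>b = 0\<close> whenever \<open>\<mu>\<^sub>a\<^sub>b > 0\<close>. By irreducibility the zero set then spreads
  to every index.\<close>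

lemma rhs_zero_at_zero_component:
  assumes mu_nonneg: "\<forall>j. \<mu> $ a $ j \<ge> 0"
    and v_nonneg: "\<forall>j. v $ j \<ge> 0"
    and rhs_zero: "rhs r K \<mu> \<alpha> v a = 0"
    and va: "v $ a = 0"
    and mab: "\<mu> $ a $ b > 0"
  shows "v $ b = 0"
proof -
  have "(\<Sum>j\<in>UNIV. \<mu> $ a $ j * v $ j) = 0"
    using rhs_zero va unfolding rhs_def by simp
  moreover have "\<forall>j. \<mu> $ a $ j * v $ j \<ge> 0"
    using mu_nonneg v_nonneg by simp
  ultimately have "\<mu> $ a $ b * v $ b = 0"
    by (simp add: sum_nonneg_eq_0_iff)
  then show ?thesis
    using mab by simp
qed

lemma irreducible_mat_edge_closed_zero:
  assumes irred: "irreducible_mat M"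
    and closed: "\<And>a b. v $ a = 0 \<Longrightarrow> M $ a $ b > 0 \<Longrightarrow> v $ b = (0::real)"
    and vi: "v $ i = 0"
  shows "v = 0"
proof -
  have "v $ j = 0" if "(i, j) \<in> {(a, b). a \<noteq> b \<and> M $ a $ b > 0}\<^sup>+" for j
    using that by (induction rule: trancl_induct) (use closed vi in auto)
  then have "v $ j = 0" for j
    using irred vi unfolding irreducible_mat_def by (cases "i = j") auto
  then show ?thesis
    by (simp add: vec_eq_iff)
qed

theorem lemma4p2:
  fixes r :: "real^'n" and K :: real and \<mu> :: "real^'n^'n"
    and \<alpha> :: "real^'n \<Rightarrow> real" and v :: "real^'n"
  assumes K_pos: "K > 0"
    and r_pos: "\<forall>i. r $ i > 0"
    and mu_nonneg: "\<forall>i j. \<mu> $ i $ j \<ge> 0"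
    and mu_sym: "\<forall>i j. \<mu> $ i $ j = \<mu> $ j $ i"
    and mu_irred: "irreducible_mat \<mu>"
    and alpha_lip: "locally_lipschitz \<alpha>"
    and alpha_zero: "\<alpha> 0 = 0"
    and alpha_mono: "\<forall>u w. (\<forall>i. u $ i \<le> w $ i) \<longrightarrow> \<alpha> u \<le> \<alpha> w"
    and alpha_growth: "\<exists>R k c. R > 0 \<and> k > 0 \<and> c > 0 \<and>
        (\<forall>w. (\<forall>j. w $ j \<ge> 0) \<and> (\<Sum>j\<in>UNIV. \<bar>w $ j\<bar>) \<ge> R
              \<longrightarrow> c * (\<Sum>j\<in>UNIV. w $ j) powr k \<le> \<alpha> w)"
    and v_nonneg: "\<forall>i. v $ i \<ge> 0"
    and v_stat: "stationary r K \<mu> \<alpha> v"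
  shows "v = 0 \<or> (\<forall>i. v $ i > 0)"
proof (cases "\<forall>i. v $ i > 0")
  case False
  then obtain i where "v $ i = 0"
    using v_nonneg by (metis less_eq_real_def)
  moreover have "v $ b = 0" if "v $ a = 0" and "\<mu> $ a $ b > 0" for a b
    using rhs_zero_at_zero_component[OF _ v_nonneg _ that] mu_nonneg v_stat
    unfolding stationary_def by blast
  ultimately have "v = 0"
    using irreducible_mat_edge_closed_zero[OF mu_irred] by blast
  then show ?thesis ..
qed simp

end
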